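(* Let $d>0$ be square-free and $n\in\mathbb{Z}$. Then every immersed totally geodesic surface in $\mathbb{H}^3/\Gamma_d(n)$ of discriminant $D\le n/4$ is embedded.
   Context: $\mathcal{O}_d$ is the ring of integers of $\mathbb{Q}(\sqrt{-d})$, $\Gamma_d=\mathrm{PSL}(2,\mathcal{O}_d)$, and $\Gamma_d(n)=\ker(\Gamma_d\to\mathrm{PSL}(2,\mathcal{O}_d/n\mathcal{O}_d))$. Immersed totally geodesic surfaces in $\mathbb{H}^3/\Gamma$ ($\Gamma<\Gamma_d$ of finite index) correspond to $\Gamma$-orbits of circles/lines $\mathcal{C}:a|z|^2+Bz+\bar B\bar z+c=0$ with $a,c\in\mathbb{Z}$, $B\in\mathcal{O}_d$; the discriminant of the surface is $D=|B|^2-ac>0$. The surface is the image of the hyperbolic plane $H_{\mathcal{C}}$ bounded by $\mathcal{C}$, and it is embedded if for all $\gamma\in\Gamma$, $\gamma H_{\mathcal{C}}=H_{\mathcal{C}}$ or $\gamma H_{\mathcal{C}}\cap H_{\mathcal{C}}=\emptyset$. *)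

theory Defs
  imports Complex_Main "HOL-Computational_Algebra.Squarefree"
begin

text \<open>The ring of integers O_d of Q(sqrt(-d)), d > 0 squarefree, as a subset of the complex
numbers: Z[omega] with omega = sqrt(-d) if d = 1,2 mod 4 and omega = (1 + sqrt(-d))/2 if d = 3 mod 4.\<close>

definition omega_d :: "nat \<Rightarrow> complex" where
  "omega_d d = (if d mod 4 = 3 then (1 + \<i> * of_real (sqrt (real d))) / 2
                else \<i> * of_real (sqrt (real d)))"

definition O_d :: "nat \<Rightarrow> complex set" where
  "O_d d = {of_int x + of_int y * omega_d d | x y. True}"

definition cong_Od :: "nat \<Rightarrow> int \<Rightarrow> complex \<Rightarrow> complex \<Rightarrow> bool" where
  "cong_Od d n x y \<longleftrightarrow> (\<exists>w \<in> O_d d. x - y = of_int n * w)"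

text \<open>2x2 complex matrices (alpha, beta, gamma, delta) = [[alpha, beta],[gamma, delta]].\<close>
type_synonym cmat = "complex \<times> complex \<times> complex \<times> complex"

text \<open>Representatives in SL(2,O_d) of the principal congruence subgroup Gamma_d(n) of
PSL(2,O_d): the kernel of reduction PSL(2,O_d) -> PSL(2,O_d/nO_d), i.e. matrices congruent
to +I or -I modulo n.\<close>
definition Gamma_d_n :: "nat \<Rightarrow> int \<Rightarrow> cmat set" where
  "Gamma_d_n d n = {(al, be, ga, de). al \<in> O_d d \<and> be \<in> O_d d \<and> ga \<in> O_d d \<and> de \<in> O_d d
       \<and> al * de - be * ga = 1
       \<and> ((cong_Od d n al 1 \<and> cong_Od d n be 0 \<and> cong_Od d n ga 0 \<and> cong_Od d n de 1)
          \<or> (cong_Od d n al (-1) \<and> cong_Od d n be 0 \<and> cong_Od d n ga 0 \<and> cong_Od d n de (-1)))}"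

definition H3 :: "(complex \<times> real) set" where
  "H3 = {(z, t). t > 0}"

text \<open>Poincare extension of the Moebius transformation of a matrix to H^3.\<close>
definition mob_ext :: "cmat \<Rightarrow> complex \<times> real \<Rightarrow> complex \<times> real" where
  "mob_ext g p = (case g of (al, be, ga, de) \<Rightarrow> (case p of (z, t) \<Rightarrow>
     (let N = (cmod (ga * z + de))\<^sup>2 + (cmod ga)\<^sup>2 * t\<^sup>2 in
      (((al * z + be) * cnj (ga * z + de) + al * cnj ga * of_real (t\<^sup>2)) / of_real N, t / N))))"

definition Hplane :: "int \<Rightarrow> complex \<Rightarrow> int \<Rightarrow> (complex \<times> real) set" where
  "Hplane a B c = {(z, t). t > 0 \<and>
      of_int a * of_real ((cmod z)\<^sup>2 + t\<^sup>2) + B * z + cnj B * cnj z + of_int c = 0}"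

definition disc :: "int \<Rightarrow> complex \<Rightarrow> int \<Rightarrow> real" where
  "disc a B c = (cmod B)\<^sup>2 - real_of_int (a * c)"

definition embedded_in :: "cmat set \<Rightarrow> (complex \<times> real) set \<Rightarrow> bool" where
  "embedded_in G H \<longleftrightarrow> (\<forall>g \<in> G. mob_ext g ` H = H \<or> mob_ext g ` H \<inter> H = {})"

end

theory Submission
  imports Defs "HOL-Library.Product_Plus"
begin

text \<open>A plane H is the zero set in H3 of a real form F = (A, B, C), and g in SL(2, C) maps the
zero set of the pulled back form g^*F onto that of F; pulling back preserves the discriminant.
For g in Gamma_d(n) and integral F, the difference g^*F - F is n times an integral form, so its
discriminant is n^2 k with k an integer. If g H meets H, then g^*F and F have a common zero in
H3, hence so do g^*F - F and g^*F + F, whose discriminants are n^2 k and 4 D - n^2 k by the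
parallelogram law. As 4 D \<le> n \<le> n^2, one of them is nonpositive; but a nonzero form with
nonpositive discriminant has no zero in H3. Hence g^*F = F or g^*F = - F, and g H = H.\<close>

type_synonym hform = "real \<times> complex \<times> real"

fun hform_eval :: "hform \<Rightarrow> complex \<times> real \<Rightarrow> real" where
  "hform_eval (A, B, C) (z, t) = A * ((cmod z)\<^sup>2 + t\<^sup>2) + 2 * Re (B * z) + C"

fun hform_disc :: "hform \<Rightarrow> real" where
  "hform_disc (A, B, C) = (cmod B)\<^sup>2 - A * C"

definition hform_plane :: "hform \<Rightarrow> (complex \<times> real) set" where
  "hform_plane F = {p \<in> H3. hform_eval F p = 0}"

lemma of_real_hform_eval:
  "complex_of_real (hform_eval (A, B, C) (z, t))
     = of_real A * (z * cnj z + of_real (t\<^sup>2)) + B * z + cnj B * cnj z + of_real C"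
  by (simp add: complex_eq_iff cmod_power2, simp add: power2_eq_square algebra_simps)

lemma hform_eval_add: "hform_eval (F + G) p = hform_eval F p + hform_eval G p"
  by (cases F; cases G; cases p) (simp add: algebra_simps)

lemma hform_eval_diff: "hform_eval (F - G) p = hform_eval F p - hform_eval G p"
  by (cases F; cases G; cases p) (simp add: algebra_simps)

lemma hform_eval_uminus: "hform_eval (- F) p = - hform_eval F p"
  by (cases F; cases p) (simp add: algebra_simps)

lemma hform_plane_uminus: "hform_plane (- F) = hform_plane F"
  by (simp add: hform_plane_def hform_eval_uminus)

lemma hform_disc_parallelogram:
  "hform_disc (F + G) + hform_disc (F - G) = 2 * hform_disc F + 2 * hform_disc G"
  by (cases F; cases G) (simp add: cmod_power2, simp add: power2_eq_square algebra_simps)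

lemma hform_disc_pos_if_vanishes:
  assumes "F \<noteq> 0" and "p \<in> H3" and "hform_eval F p = 0"
  shows "hform_disc F > 0"
proof -
  obtain A B C z t where F: "F = (A, B, C)" and p: "p = (z, t)" by (cases F; cases p) auto
  have "t > 0" using assms(2) p by (simp add: H3_def)
  have "A * ((Re z)\<^sup>2 + (Im z)\<^sup>2 + t\<^sup>2) + 2 * (Re B * Re z - Im B * Im z) + C = 0"
    using assms(3) unfolding F p by (simp add: cmod_power2 algebra_simps)
  then have square: "(A * Re z + Re B)\<^sup>2 + (A * Im z - Im B)\<^sup>2 + (A * t)\<^sup>2 = hform_disc F"
    unfolding F by (simp add: cmod_power2) algebra
  show ?thesis
  proof (rule ccontr)
    assume "\<not> hform_disc F > 0"
    with square have "(A * t)\<^sup>2 \<le> 0" and "(A * Re z + Re B)\<^sup>2 + (A * Im z - Im B)\<^sup>2 \<le> 0"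
      by (smt (verit) zero_le_power2)+
    then have "A = 0" "Re B = 0" "Im B = 0" using \<open>t > 0\<close>
      by (simp_all add: sum_power2_le_zero_iff)
    then have "C = 0" using assms(3) unfolding F p by simp
    with \<open>A = 0\<close> \<open>Re B = 0\<close> \<open>Im B = 0\<close> have "F = 0"
      unfolding F by (simp add: zero_prod_def complex_eq_iff)
    with assms(1) show False ..
  qed
qed

lemma hform_eq_or_neg_if_common_zero:
  fixes F G :: hform and n :: real and k :: int
  assumes "p \<in> H3" and "hform_eval F p = 0" and "hform_eval G p = 0"
    and "hform_disc G = hform_disc F"
    and "hform_disc (G - F) = n\<^sup>2 * of_int k"
    and "4 * hform_disc F \<le> n\<^sup>2"
  shows "G = F \<or> G = - F"
proof (cases "k \<le> 0")
  case True
  then have "hform_disc (G - F) \<le> 0" using assms(5) by (simp add: mult_nonneg_nonpos)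
  moreover have "hform_eval (G - F) p = 0" using assms(2,3) by (simp add: hform_eval_diff)
  ultimately have "G - F = 0" using hform_disc_pos_if_vanishes[OF _ assms(1)] by fastforce
  then show ?thesis by simp
next
  case False
  have "hform_disc (G + F) = 4 * hform_disc F - n\<^sup>2 * of_int k"
    using hform_disc_parallelogram[of G F] assms(4,5) by simp
  also have "\<dots> \<le> 4 * hform_disc F - n\<^sup>2"
    using False by (simp add: mult_le_cancel_left1)
  also have "\<dots> \<le> 0" using assms(6) by simp
  finally have "hform_disc (G + F) \<le> 0" .
  moreover have "hform_eval (G + F) p = 0" using assms(2,3) by (simp add: hform_eval_add)
  ultimately have "G + F = 0" using hform_disc_pos_if_vanishes[OF _ assms(1)] by fastforce
  then show ?thesis by (simp add: eq_neg_iff_add_eq_0)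
qed

fun mdet :: "cmat \<Rightarrow> complex" where
  "mdet (al, be, ga, de) = al * de - be * ga"

fun madj :: "cmat \<Rightarrow> cmat" where
  "madj (al, be, ga, de) = (de, - be, - ga, al)"

text \<open>With F read as the Hermitian matrix M = [[A, cnj B], [B, C]], so that
hform_eval F (z, 0) = v^* M v for v = (z, 1), the pullback is g^* M g, and hform_disc F = - det M.\<close>

fun hform_pullback :: "cmat \<Rightarrow> hform \<Rightarrow> hform" where
  "hform_pullback (al, be, ga, de) (A, B, C) =
     (A * (cmod al)\<^sup>2 + 2 * Re (B * al * cnj ga) + C * (cmod ga)\<^sup>2,
      of_real A * al * cnj be + B * al * cnj de + cnj B * cnj be * ga + of_real C * ga * cnj de,
      A * (cmod be)\<^sup>2 + 2 * Re (B * be * cnj de) + C * (cmod de)\<^sup>2)"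

lemma of_real_2_Re: "complex_of_real (2 * Re w) = w + cnj w"
  by (simp add: complex_add_cnj)

lemma of_real_mult_cmod_square: "complex_of_real (x * (cmod w)\<^sup>2) = of_real x * w * cnj w"
  by (simp add: complex_norm_square[symmetric])

lemma hform_pullback_complex:
  assumes "hform_pullback (al, be, ga, de) (A, B, C) = (A', B', C')"
  shows "complex_of_real A' =
           of_real A * al * cnj al + B * al * cnj ga + cnj B * cnj al * ga + of_real C * ga * cnj ga"
    and "B' = of_real A * al * cnj be + B * al * cnj de + cnj B * cnj be * ga + of_real C * ga * cnj de"
    and "complex_of_real C' =
           of_real A * be * cnj be + B * be * cnj de + cnj B * cnj be * de + of_real C * de * cnj de"
  using assms[symmetric]
  by (simp_all only: hform_pullback.simps prod.inject of_real_add of_real_mult_cmod_square of_real_2_Re)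
    (simp_all add: algebra_simps)

lemma hform_pullback_madj:
  assumes "mdet g = 1"
  shows "hform_pullback (madj g) (hform_pullback g F) = F"
proof -
  obtain al be ga de A B C where g: "g = (al, be, ga, de)" and F: "F = (A, B, C)"
    by (cases g; cases F) auto
  obtain A' B' C' where F': "hform_pullback g F = (A', B', C')"
    by (cases "hform_pullback g F") auto
  obtain A'' B'' C'' where F'': "hform_pullback (madj g) (A', B', C') = (A'', B'', C'')"
    by (cases "hform_pullback (madj g) (A', B', C')") auto
  have det: "al * de - be * ga = 1" using assms g by simp
  note c' = hform_pullback_complex[OF F'[unfolded g F]]
  note c'' = hform_pullback_complex[OF F''[unfolded g madj.simps]]
  have detc: "cnj al * cnj de - cnj be * cnj ga = 1" using arg_cong[OF det, of cnj] by simp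
  note cnj_simps =
    complex_cnj_add complex_cnj_mult complex_cnj_complex_of_real complex_cnj_cnj complex_cnj_minus
  have "complex_of_real A'' = of_real A" unfolding c'' c' cnj_simps using det detc by algebra
  moreover have "B'' = B" unfolding c'' c' cnj_simps using det detc by algebra
  moreover have "complex_of_real C'' = of_real C" unfolding c'' c' cnj_simps using det detc by algebra
  ultimately show ?thesis using F F' F'' by simp
qed

lemma hform_disc_pullback:
  assumes "mdet g = 1"
  shows "hform_disc (hform_pullback g F) = hform_disc F"
proof -
  obtain al be ga de A B C where g: "g = (al, be, ga, de)" and F: "F = (A, B, C)"
    by (cases g; cases F) auto
  obtain A' B' C' where F': "hform_pullback g F = (A', B', C')"
    by (cases "hform_pullback g F") auto
  note pb = hform_pullback_complex[OF F'[unfolded g F]]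
  have det: "al * de - be * ga = 1" using assms g by simp
  have detc: "cnj al * cnj de - cnj be * cnj ga = 1" using arg_cong[OF det, of cnj] by simp
  have "complex_of_real (hform_disc (A', B', C')) = B' * cnj B' - of_real A' * of_real C'"
    by (simp add: complex_norm_square[symmetric])
  also have "\<dots> = B * cnj B - of_real A * of_real C"
    unfolding pb complex_cnj_add complex_cnj_mult complex_cnj_complex_of_real complex_cnj_cnj
    using det detc by algebra
  also have "\<dots> = complex_of_real (hform_disc F)"
    unfolding F by (simp add: complex_norm_square[symmetric])
  finally show ?thesis unfolding F' by (simp only: of_real_eq_iff)
qed

fun mob_denom :: "cmat \<Rightarrow> complex \<times> real \<Rightarrow> real" where
  "mob_denom (al, be, ga, de) (z, t) = (cmod (ga * z + de))\<^sup>2 + (cmod ga)\<^sup>2 * t\<^sup>2"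

lemma mob_denom_pos:
  assumes "mdet g = 1" and "p \<in> H3"
  shows "mob_denom g p > 0"
proof -
  obtain al be ga de z t where g: "g = (al, be, ga, de)" and p: "p = (z, t)"
    by (cases g; cases p) auto
  have "t > 0" using assms(2) p by (simp add: H3_def)
  show ?thesis
  proof (cases "ga = 0")
    case True
    then have "de \<noteq> 0" using assms(1) g by auto
    with True show ?thesis unfolding g p by simp
  next
    case False
    with \<open>t > 0\<close> have "(cmod ga)\<^sup>2 * t\<^sup>2 > 0" by simp
    then show ?thesis unfolding g p by (simp add: add_nonneg_pos)
  qed
qed

lemma mob_ext_Pair:
  "mob_ext (al, be, ga, de) (z, t) =
     (((al * z + be) * cnj (ga * z + de) + al * cnj ga * of_real (t\<^sup>2))
        / of_real (mob_denom (al, be, ga, de) (z, t)),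
      t / mob_denom (al, be, ga, de) (z, t))"
  by (simp add: mob_ext_def Let_def)

lemma mob_ext_H3:
  assumes "mdet g = 1" and "p \<in> H3"
  shows "mob_ext g p \<in> H3"
  using mob_denom_pos[OF assms] assms(2)
  by (cases g; cases p) (simp add: mob_ext_Pair H3_def)

lemma hform_eval_mob_ext:
  assumes "mdet g = 1" and "p \<in> H3"
  shows "hform_eval F (mob_ext g p) * mob_denom g p = hform_eval (hform_pullback g F) p"
proof -
  obtain al be ga de z t A B C
    where g: "g = (al, be, ga, de)" and p: "p = (z, t)" and F: "F = (A, B, C)"
    by (cases g; cases p; cases F) auto
  obtain A' B' C' where F': "hform_pullback g F = (A', B', C')"
    by (cases "hform_pullback g F") auto
  note pb = hform_pullback_complex[OF F'[unfolded g F]]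
  have det: "al * de - be * ga = 1" using assms(1) g by simp
  have detc: "cnj al * cnj de - cnj be * cnj ga = 1" using arg_cong[OF det, of cnj] by simp
  define N where "N = mob_denom g p"
  have "N > 0" unfolding N_def using mob_denom_pos[OF assms] .
  define T where "T = complex_of_real (t\<^sup>2)"
  define Z where "Z = (al * z + be) * cnj (ga * z + de) + al * cnj ga * T"
  define P where "P = (al * z + be) * cnj (al * z + be) + al * cnj al * T"
  have N: "complex_of_real N = (ga * z + de) * cnj (ga * z + de) + ga * cnj ga * T"
    unfolding N_def g p T_def mob_denom.simps of_real_add of_real_mult complex_norm_square ..
  have norm_identity: "Z * cnj Z + T = complex_of_real N * P"
    unfolding N Z_def P_def T_def using det detc by (simp add: algebra_simps) algebra
  have image: "mob_ext g p = (Z / of_real N, t / N)"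
    unfolding g p mob_ext_Pair Z_def T_def N_def ..
  have "complex_of_real (hform_eval F (mob_ext g p) * N)
      = (of_real A * (Z / of_real N * cnj (Z / of_real N) + of_real ((t / N)\<^sup>2))
          + B * (Z / of_real N) + cnj B * cnj (Z / of_real N) + of_real C) * of_real N"
    unfolding F image of_real_mult of_real_hform_eval ..
  also have "\<dots> = of_real A * ((Z * cnj Z + T) / of_real N)
      + B * Z + cnj B * cnj Z + of_real C * of_real N"
    using \<open>N > 0\<close> unfolding T_def by (simp add: field_simps power2_eq_square)
  also have "\<dots> = of_real A * P + B * Z + cnj B * cnj Z + of_real C * of_real N"
    using norm_identity \<open>N > 0\<close> by simp
  also have "\<dots> = complex_of_real (hform_eval (hform_pullback g F) p)"
    unfolding F' p of_real_hform_eval pb N P_def Z_def T_def by (simp add: algebra_simps)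
  finally show ?thesis unfolding N_def by (simp only: of_real_eq_iff)
qed

lemma mob_ext_mem_hform_plane_iff:
  assumes "mdet g = 1" and "p \<in> H3"
  shows "mob_ext g p \<in> hform_plane F \<longleftrightarrow> p \<in> hform_plane (hform_pullback g F)"
  using hform_eval_mob_ext[OF assms, of F] mob_denom_pos[OF assms] mob_ext_H3[OF assms] assms(2)
  by (auto simp: hform_plane_def)

lemma H3_eq_if_hform_eval_eq:
  assumes "p \<in> H3" and "q \<in> H3" and "\<And>F. hform_eval F p = hform_eval F q"
  shows "p = q"
proof -
  obtain z t z' t' where p: "p = (z, t)" and q: "q = (z', t')" by (cases p; cases q) auto
  have "Re z = Re z'" using assms(3)[of "(0, 1, 0)"] unfolding p q by simp
  moreover have "Im z = Im z'" using assms(3)[of "(0, - \<i>, 0)"] unfolding p q by simp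
  ultimately have "z = z'" by (simp add: complex_eq_iff)
  moreover have "t\<^sup>2 = t'\<^sup>2" using assms(3)[of "(1, 0, 0)"] \<open>z = z'\<close> unfolding p q by simp
  ultimately show ?thesis using assms(1,2) unfolding p q H3_def by (simp add: power2_eq_iff_nonneg)
qed

lemma mdet_madj: "mdet (madj g) = mdet g"
  by (cases g) (simp add: algebra_simps)

text \<open>Going through madj g and then g multiplies the value of every form by the same positive
factor, and the constant form (0, 0, 1) shows that this factor is 1.\<close>
lemma mob_ext_madj:
  assumes "mdet g = 1" and "p \<in> H3"
  shows "mob_ext g (mob_ext (madj g) p) = p"
proof -
  have adj: "mdet (madj g) = 1" using assms(1) by (simp add: mdet_madj)
  define q where "q = mob_ext (madj g) p"
  have "q \<in> H3" unfolding q_def using mob_ext_H3[OF adj assms(2)] .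
  define c where "c = mob_denom g q * mob_denom (madj g) p"
  have scale: "hform_eval F (mob_ext g q) * c = hform_eval F p" for F
    using hform_eval_mob_ext[OF assms(1) \<open>q \<in> H3\<close>, of F]
      hform_eval_mob_ext[OF adj assms(2), of "hform_pullback g F"]
    unfolding c_def q_def hform_pullback_madj[OF assms(1)] by (metis mult.assoc)
  have "c = 1" using scale[of "(0, 0, 1)"] by (cases p; cases "mob_ext g q") simp
  then show ?thesis
    using H3_eq_if_hform_eval_eq mob_ext_H3[OF assms(1) \<open>q \<in> H3\<close>] assms(2) scale
    unfolding q_def by auto
qed

lemma mob_ext_image_hform_plane:
  assumes "mdet g = 1"
  shows "mob_ext g ` hform_plane (hform_pullback g F) = hform_plane F"
proof
  show "mob_ext g ` hform_plane (hform_pullback g F) \<subseteq> hform_plane F"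
  proof
    fix q assume "q \<in> mob_ext g ` hform_plane (hform_pullback g F)"
    then obtain p where p: "p \<in> hform_plane (hform_pullback g F)" and q: "q = mob_ext g p" by blast
    then have "p \<in> H3" by (simp add: hform_plane_def)
    with p q show "q \<in> hform_plane F" using mob_ext_mem_hform_plane_iff[OF assms] by blast
  qed
next
  show "hform_plane F \<subseteq> mob_ext g ` hform_plane (hform_pullback g F)"
  proof
    fix q assume "q \<in> hform_plane F"
    then have "q \<in> H3" by (simp add: hform_plane_def)
    define p where "p = mob_ext (madj g) q"
    have "p \<in> H3" unfolding p_def using mob_ext_H3 \<open>q \<in> H3\<close> assms by (simp add: mdet_madj)
    moreover have "mob_ext g p = q" unfolding p_def using mob_ext_madj[OF assms \<open>q \<in> H3\<close>] .
    ultimately have "p \<in> hform_plane (hform_pullback g F)"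
      using mob_ext_mem_hform_plane_iff[OF assms] \<open>q \<in> hform_plane F\<close> by blast
    with \<open>mob_ext g p = q\<close> show "q \<in> mob_ext g ` hform_plane (hform_pullback g F)" by blast
  qed
qed

lemma cnj_omega_d: "\<exists>k::int. cnj (omega_d d) = of_int k - omega_d d"
proof (cases "d mod 4 = 3")
  case True
  then show ?thesis unfolding omega_d_def by (intro exI[of _ 1]) (simp add: complex_eq_iff)
next
  case False
  then show ?thesis unfolding omega_d_def by (intro exI[of _ 0]) (simp add: complex_eq_iff)
qed

lemma omega_d_mult_cnj: "\<exists>m::int. omega_d d * cnj (omega_d d) = of_int m"
proof (cases "d mod 4 = 3")
  case True
  then have "4 dvd d + 1" by presburger
  then obtain k where "d + 1 = 4 * k" ..
  then have "omega_d d * cnj (omega_d d) = of_int (int k)"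
    unfolding omega_d_def using True
    by (simp add: complex_eq_iff power2_eq_square[symmetric] field_simps)
  then show ?thesis by blast
next
  case False
  then have "omega_d d * cnj (omega_d d) = of_int (int d)"
    unfolding omega_d_def by (simp add: complex_eq_iff power2_eq_square)
  then show ?thesis by blast
qed

lemma of_int_in_O_d: "of_int k \<in> O_d d"
  unfolding O_d_def by (intro CollectI exI[of _ k] exI[of _ 0]) simp

lemma O_d_add: "x \<in> O_d d \<Longrightarrow> y \<in> O_d d \<Longrightarrow> x + y \<in> O_d d"
  unfolding O_d_def by clarify (metis (no_types) add.commute add.left_commute distrib_right of_int_add)

lemma O_d_mult:
  assumes "x \<in> O_d d" and "y \<in> O_d d"
  shows "x * y \<in> O_d d"
proof -
  obtain k where k: "cnj (omega_d d) = of_int k - omega_d d" using cnj_omega_d by blast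
  obtain m where m: "omega_d d * cnj (omega_d d) = of_int m" using omega_d_mult_cnj by blast
  have omega_sq: "omega_d d * omega_d d = of_int k * omega_d d - of_int m"
    using m unfolding k by (simp add: algebra_simps)
  obtain p q p' q' :: int where x: "x = of_int p + of_int q * omega_d d"
    and y: "y = of_int p' + of_int q' * omega_d d"
    using assms unfolding O_d_def by blast
  have "x * y = of_int (p * p' - q * q' * m) + of_int (p * q' + p' * q + q * q' * k) * omega_d d"
    unfolding x y of_int_add of_int_mult of_int_diff using omega_sq by algebra
  then show ?thesis unfolding O_d_def by blast
qed

lemma O_d_cnj:
  assumes "x \<in> O_d d"
  shows "cnj x \<in> O_d d"
proof -
  obtain k where k: "cnj (omega_d d) = of_int k - omega_d d" using cnj_omega_d by blast
  obtain p q :: int where "x = of_int p + of_int q * omega_d d"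
    using assms unfolding O_d_def by blast
  then have "cnj x = of_int (p + q * k) + of_int (- q) * omega_d d"
    by (simp add: k algebra_simps)
  then show ?thesis unfolding O_d_def by blast
qed

lemma O_d_real_imp_Ints:
  assumes "x \<in> O_d d" and "Im x = 0"
  shows "x \<in> \<int>"
proof -
  obtain p q :: int where x: "x = of_int p + of_int q * omega_d d"
    using assms(1) unfolding O_d_def by blast
  have "q = 0 \<or> d = 0"
    using assms(2) unfolding x omega_d_def by (auto split: if_splits)
  then have "x = of_int p" unfolding x omega_d_def by auto
  then show ?thesis by simp
qed

lemma O_d_trace_Ints: "x \<in> O_d d \<Longrightarrow> x + cnj x \<in> \<int>"
  by (intro O_d_real_imp_Ints O_d_add O_d_cnj) simp_all

lemma O_d_norm_Ints: "x \<in> O_d d \<Longrightarrow> x * cnj x \<in> \<int>"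
  by (intro O_d_real_imp_Ints O_d_mult O_d_cnj) simp_all

lemma Gamma_d_n_mdet: "g \<in> Gamma_d_n d n \<Longrightarrow> mdet g = 1"
  by (auto simp: Gamma_d_n_def)

lemma Gamma_d_n_congruent:
  assumes "g \<in> Gamma_d_n d n"
  obtains e :: int and x1 x2 x3 x4 where "e * e = 1"
    and "x1 \<in> O_d d" "x2 \<in> O_d d" "x3 \<in> O_d d" "x4 \<in> O_d d"
    and "g = (of_int e + of_int n * x1, of_int n * x2, of_int n * x3, of_int e + of_int n * x4)"
proof -
  obtain al be ga de where g: "g = (al, be, ga, de)" by (cases g) auto
  have "\<exists>e::int. e * e = 1 \<and> cong_Od d n al (of_int e) \<and> cong_Od d n be 0
      \<and> cong_Od d n ga 0 \<and> cong_Od d n de (of_int e)"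
    using assms unfolding g Gamma_d_n_def by (auto intro: exI[of _ 1] exI[of _ "-1"])
  then obtain e :: int and x1 x2 x3 x4 where "e * e = 1"
      "x1 \<in> O_d d" "al - of_int e = of_int n * x1" "x2 \<in> O_d d" "be - 0 = of_int n * x2"
      "x3 \<in> O_d d" "ga - 0 = of_int n * x3" "x4 \<in> O_d d" "de - of_int e = of_int n * x4"
    unfolding cong_Od_def by blast
  then show ?thesis using that unfolding g by (simp add: algebra_simps)
qed

lemma hform_pullback_Gamma_d_n:
  assumes "g \<in> Gamma_d_n d n" and "B \<in> O_d d"
  shows "\<exists>a' B' c'. B' \<in> O_d d \<and>
           hform_pullback g (of_int a, B, of_int c) - (of_int a, B, of_int c)
           = (of_int n * of_int a', of_int n * B', of_int n * of_int c')"
proof -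
  obtain e :: int and x1 x2 x3 x4 where e: "e * e = 1"
    and x: "x1 \<in> O_d d" "x2 \<in> O_d d" "x3 \<in> O_d d" "x4 \<in> O_d d"
    and g: "g = (of_int e + of_int n * x1, of_int n * x2, of_int n * x3, of_int e + of_int n * x4)"
    using Gamma_d_n_congruent[OF assms(1)] by blast
  have e': "complex_of_int e * of_int e = 1" using e by (metis of_int_1 of_int_mult)
  obtain A' B' C' where F': "hform_pullback g (of_int a, B, of_int c) = (A', B', C')"
    by (cases "hform_pullback g (of_int a, B, of_int c)") auto
  note pb = hform_pullback_complex[OF F'[unfolded g], unfolded of_real_of_int_eq]
  note cnj_simps = complex_cnj_add complex_cnj_mult complex_cnj_of_int complex_cnj_cnj
  \<comment> \<open>the entries of (g^*F - F) / n; the constant terms cancel because e * e = 1\<close>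
  define w1 where "w1 = of_int a * (of_int e * (x1 + cnj x1) + of_int n * (x1 * cnj x1))
    + of_int e * (B * cnj x3 + cnj (B * cnj x3)) + of_int n * (B * x1 * cnj x3 + cnj (B * x1 * cnj x3))
    + of_int c * of_int n * (x3 * cnj x3)"
  define w2 where "w2 = of_int a * (of_int e + of_int n * x1) * cnj x2
    + B * (of_int e * (x1 + cnj x4) + of_int n * x1 * cnj x4)
    + of_int n * cnj B * cnj x2 * x3 + of_int c * x3 * (of_int e + of_int n * cnj x4)"
  define w3 where "w3 = of_int a * of_int n * (x2 * cnj x2)
    + of_int e * (B * x2 + cnj (B * x2)) + of_int n * (B * x2 * cnj x4 + cnj (B * x2 * cnj x4))
    + of_int c * (of_int e * (x4 + cnj x4) + of_int n * (x4 * cnj x4))"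
  have "w1 \<in> \<int>" "w3 \<in> \<int>" unfolding w1_def w3_def
    by (intro O_d_trace_Ints[where d = d] O_d_norm_Ints[where d = d]
        Ints_add Ints_mult Ints_of_int O_d_mult O_d_cnj x assms(2))+
  then obtain k1 k3 where k: "w1 = of_int k1" "w3 = of_int k3" by (auto elim!: Ints_cases)
  have "w2 \<in> O_d d" unfolding w2_def
    by (intro O_d_add O_d_mult O_d_cnj of_int_in_O_d x assms(2))
  have "complex_of_real A' = of_int a + of_int n * w1"
    unfolding pb w1_def cnj_simps using e' by algebra
  then have A': "A' = of_int a + of_int n * of_int k1"
    unfolding k by (metis of_real_of_int_eq of_int_add of_int_mult of_real_eq_iff)
  have B': "B' = B + of_int n * w2"
    unfolding pb w2_def cnj_simps using e' by algebra
  have "complex_of_real C' = of_int c + of_int n * w3"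
    unfolding pb w3_def cnj_simps using e' by algebra
  then have C': "C' = of_int c + of_int n * of_int k3"
    unfolding k by (metis of_real_of_int_eq of_int_add of_int_mult of_real_eq_iff)
  show ?thesis
    using \<open>w2 \<in> O_d d\<close> unfolding F' A' B' C' by auto
qed

lemma hform_disc_scaled_O_d:
  assumes "B \<in> O_d d"
  shows "\<exists>k::int. hform_disc (of_int n * of_int a, of_int n * B, of_int n * of_int c)
           = (of_int n)\<^sup>2 * of_int k"
proof -
  obtain m where "B * cnj B = of_int m" using O_d_norm_Ints[OF assms] by (auto elim!: Ints_cases)
  then have "(cmod B)\<^sup>2 = of_int m"
    by (metis complex_norm_square of_real_eq_iff of_real_of_int_eq)
  then have "hform_disc (of_int n * of_int a, of_int n * B, of_int n * of_int c)
      = (of_int n)\<^sup>2 * of_int (m - a * c)"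
    by (simp add: norm_mult power_mult_distrib algebra_simps power2_eq_square)
  then show ?thesis ..
qed

lemma Hplane_eq_hform_plane: "Hplane a B c = hform_plane (of_int a, B, of_int c)"
proof -
  have "of_int a * complex_of_real ((cmod z)\<^sup>2 + t\<^sup>2) + B * z + cnj B * cnj z + of_int c
      = complex_of_real (hform_eval (of_int a, B, of_int c) (z, t))" for z t
    unfolding of_real_hform_eval of_real_add complex_norm_square by simp
  then show ?thesis
    unfolding Hplane_def hform_plane_def H3_def by (auto simp del: hform_eval.simps)
qed

theorem theorem1p3:
  fixes d :: nat and n :: int and a c :: int and B :: complex
  assumes "d > 0" and "squarefree d"
    and "B \<in> O_d d"
    and "disc a B c > 0"
    and "disc a B c \<le> real_of_int n / 4"
  shows "embedded_in (Gamma_d_n d n) (Hplane a B c)"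
proof -
  define F :: hform where "F = (of_int a, B, of_int c)"
  have "hform_disc F = disc a B c" unfolding F_def disc_def by simp
  moreover have "real_of_int n \<le> (of_int n)\<^sup>2" using assms(4,5) by (simp add: power2_eq_square)
  ultimately have small_disc: "4 * hform_disc F \<le> (of_int n)\<^sup>2" using assms(5) by linarith
  have "mob_ext g ` hform_plane F = hform_plane F"
    if g: "g \<in> Gamma_d_n d n" and p: "p \<in> hform_plane F" "mob_ext g p \<in> hform_plane F" for g p
  proof -
    have det: "mdet g = 1" using Gamma_d_n_mdet[OF g] .
    have "p \<in> H3" "hform_eval F p = 0" using p(1) by (simp_all add: hform_plane_def)
    moreover have "hform_eval (hform_pullback g F) p = 0"
      using p mob_ext_mem_hform_plane_iff[OF det \<open>p \<in> H3\<close>] by (simp add: hform_plane_def)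
    moreover obtain k where "hform_disc (hform_pullback g F - F) = (of_int n)\<^sup>2 * of_int k"
      using hform_pullback_Gamma_d_n[OF g assms(3)] hform_disc_scaled_O_d unfolding F_def by metis
    ultimately have "hform_pullback g F = F \<or> hform_pullback g F = - F"
      using hform_eq_or_neg_if_common_zero hform_disc_pullback[OF det] small_disc by blast
    then have "hform_plane (hform_pullback g F) = hform_plane F"
      by (metis hform_plane_uminus)
    then show ?thesis using mob_ext_image_hform_plane[OF det, of F] by simp
  qed
  then show ?thesis
    unfolding embedded_in_def Hplane_eq_hform_plane F_def[symmetric] by blast
qed

end
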